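(* Let $\mathcal{D}$ be a document collection, fix a query $q$ with a unique relevant document $d_q$, and let $f\in[0,1]$. Consider a Repartition system: $r\ge1$ partitions $\{D^{(i)}_1,\dots,D^{(i)}_n\}$, $i=1,\dots,r$, of $\mathcal{D}$, each into $n$ pairwise disjoint shards, constructed independently at random, so that the indices of the shards containing $d_q$ in the different partitions are mutually independent; assume all partitions have the same probability distribution for $q$, i.e., there is $p:\{1,\dots,n\}\to[0,1]$ with $\sum_j p(j)=1$ and $\Pr[d_q\in D^{(i)}_j]=p(j)$ for all $i,j$. Consider also a Replication system consisting of $r$ identical replicas of one of these partitions. In both systems each of the $nr$ shards (replicas) resides on its own node, and each node independently fails to respond with probability $f$, independently of the location of $d_q$; the success probability of a selection of shards is the probability that $d_q$ lies in some selected shard (replica) whose node responds. Then for every shard selection used with the Replication system, there exists a shard selection for the Repartition system selecting the same number of shards whose success probability for $q$ is larger than or equal to that of the Replication selection.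
   Context: Distributed search model: each node searches only its own shard; the query is sent to the selected shards, and results of nodes that fail to respond are dropped. In Replication, all $r$ partitions are exact copies; in Repartition, the $r$ partitions are produced by independent applications of a randomized partitioning scheme. *)

theory Defs
  imports "HOL-Probability.Probability"
begin

text \<open>Nodes are indexed by pairs (j, i): shard j (1..n) of partition / replica i (1..r).
  A node failure vector assigns True to a node that fails to respond; each node fails
  independently with probability f.\<close>

definition fail_pmf :: "nat \<Rightarrow> nat \<Rightarrow> real \<Rightarrow> (nat \<times> nat \<Rightarrow> bool) pmf" where
  "fail_pmf n r f = Pi_pmf ({1..n} \<times> {1..r}) False (\<lambda>_. bernoulli_pmf f)"

text \<open>Replication: one partition, d_q lies in shard k (distributed by p) in every replica.\<close>

definition replication_success ::
  "nat \<Rightarrow> nat \<Rightarrow> nat pmf \<Rightarrow> real \<Rightarrow> (nat \<times> nat) set \<Rightarrow> real" where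
  "replication_success n r p f S =
     measure_pmf.prob (pair_pmf p (fail_pmf n r f))
       {(k, fl). \<exists>(j, i) \<in> S. k = j \<and> \<not> fl (j, i)}"

text \<open>Repartition: in partition i, d_q lies in shard loc i; the loc i are independent,
  each distributed by p.\<close>

definition repartition_success ::
  "nat \<Rightarrow> nat \<Rightarrow> nat pmf \<Rightarrow> real \<Rightarrow> (nat \<times> nat) set \<Rightarrow> real" where
  "repartition_success n r p f S =
     measure_pmf.prob (pair_pmf (Pi_pmf {1..r} 0 (\<lambda>_. p)) (fail_pmf n r f))
       {(loc, fl). \<exists>(j, i) \<in> S. loc i = j \<and> \<not> fl (j, i)}"

end

theory Submission
  imports Defs
begin

text \<open>If a Replication selection picks \<open>m k\<close> replicas of shard \<open>k\<close>, let the Repartition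
  selection pick shard \<open>k\<close> in each of the partitions \<open>1, \<dots>, m k\<close> (a staircase); both select
  the same number of shards.  With \<open>K\<close> distributed by \<open>p\<close> and
  \<open>\<phi>\<^sub>i t = (if i \<le> t then f else 1)\<close>, the probability that \<open>d\<^sub>q\<close> is missed is
  \<open>E[\<Prod>\<^sub>i \<phi>\<^sub>i (m K)] = E[f ^ m K]\<close> for Replication, whereas the independence of the
  partitions makes it \<open>\<Prod>\<^sub>i E[\<phi>\<^sub>i (m K)]\<close> for Repartition.  All \<open>\<phi>\<^sub>i\<close> are antitone, so
  the factors are similarly ordered functions of \<open>K\<close>, and Chebyshev's sum inequality, iterated,
  bounds the product of the expectations by the expectation of the product.\<close>

lemma measure_pmf_prob_pair_pmf:
  "measure_pmf.prob (pair_pmf M N) E =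
   measure_pmf.expectation M (\<lambda>a. measure_pmf.prob N {b. (a, b) \<in> E})"
proof -
  have "ennreal (measure_pmf.prob (pair_pmf M N) E) = emeasure (pair_pmf M N) E"
    by (simp add: measure_pmf.emeasure_eq_measure)
  also have "\<dots> = (\<integral>\<^sup>+a. emeasure (bind_pmf N (\<lambda>b. return_pmf (a, b))) E \<partial>M)"
    by (simp add: pair_pmf_def)
  also have "\<dots> = (\<integral>\<^sup>+a. ennreal (measure_pmf.prob N {b. (a, b) \<in> E}) \<partial>M)"
  proof (intro nn_integral_cong)
    fix a
    show "emeasure (bind_pmf N (\<lambda>b. return_pmf (a, b))) E =
          ennreal (measure_pmf.prob N {b. (a, b) \<in> E})"
      using nn_integral_indicator[of "{b. (a, b) \<in> E}" "measure_pmf N"]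
      by (simp add: measure_pmf.emeasure_eq_measure[symmetric] indicator_def)
  qed
  also have "\<dots> = ennreal (measure_pmf.expectation M (\<lambda>a. measure_pmf.prob N {b. (a, b) \<in> E}))"
    by (intro nn_integral_eq_integral measure_pmf.integrable_const_bound[where B = 1]) auto
  finally show ?thesis
    by (simp add: ennreal_inj)
qed

lemma measure_Pi_pmf_bernoulli_all:
  assumes "finite A" "B \<subseteq> A" "0 \<le> f" "f \<le> 1"
  shows "measure_pmf.prob (Pi_pmf A False (\<lambda>_. bernoulli_pmf f)) {fl. \<forall>x\<in>B. fl x} = f ^ card B"
proof -
  have "measure_pmf.prob (Pi_pmf A False (\<lambda>_. bernoulli_pmf f)) {fl. \<forall>x\<in>B. fl x}
      = measure_pmf.prob (Pi_pmf A False (\<lambda>_. bernoulli_pmf f))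
          (PiE_dflt A False (\<lambda>x. if x \<in> B then {True} else UNIV))"
    using assms by (intro measure_prob_cong_0)
      (auto simp: PiE_dflt_def intro!: pmf_Pi_outside split: if_splits)
  also have "\<dots> = (\<Prod>x\<in>A. measure_pmf.prob (bernoulli_pmf f) (if x \<in> B then {True} else UNIV))"
    using assms by (simp add: measure_Pi_pmf_PiE_dflt)
  also have "\<dots> = (\<Prod>x\<in>A. if x \<in> B then f else 1)"
    using assms by (intro prod.cong refl) (simp add: measure_pmf_single)
  also have "\<dots> = f ^ card B"
    using assms by (simp add: prod.If_cases Int_absorb1)
  finally show ?thesis .
qed

lemma Chebyshev_sum_weighted:
  fixes w a b :: "'a \<Rightarrow> real"
  assumes "finite K" and w: "\<And>k. k \<in> K \<Longrightarrow> w k \<ge> 0" and sum_weights: "(\<Sum>k\<in>K. w k) = 1"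
    and ab: "\<And>x y. x \<in> K \<Longrightarrow> y \<in> K \<Longrightarrow> (a x - a y) * (b x - b y) \<ge> 0"
  shows "(\<Sum>k\<in>K. a k * w k) * (\<Sum>k\<in>K. b k * w k) \<le> (\<Sum>k\<in>K. a k * b k * w k)"
proof -
  have "0 \<le> (\<Sum>x\<in>K. \<Sum>y\<in>K. w x * w y * ((a x - a y) * (b x - b y)))"
    by (intro sum_nonneg mult_nonneg_nonneg w ab)
  also have "\<dots> = (\<Sum>x\<in>K. \<Sum>y\<in>K. (a x * b x * w x) * w y + (a y * b y * w y) * w x
         - (a x * w x) * (b y * w y) - (a y * w y) * (b x * w x))"
    by (intro sum.cong refl) (simp add: algebra_simps)
  also have "\<dots> = (\<Sum>x\<in>K. \<Sum>y\<in>K. (a x * b x * w x) * w y) + (\<Sum>x\<in>K. \<Sum>y\<in>K. (a y * b y * w y) * w x)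
       - (\<Sum>x\<in>K. \<Sum>y\<in>K. (a x * w x) * (b y * w y)) - (\<Sum>x\<in>K. \<Sum>y\<in>K. (a y * w y) * (b x * w x))"
    by (simp add: sum.distrib sum_subtractf)
  also have "(\<Sum>x\<in>K. \<Sum>y\<in>K. (a x * b x * w x) * w y) = (\<Sum>k\<in>K. a k * b k * w k)"
    by (simp add: sum_distrib_left[symmetric] sum_weights)
  also have "(\<Sum>x\<in>K. \<Sum>y\<in>K. (a y * b y * w y) * w x) = (\<Sum>k\<in>K. a k * b k * w k)"
    by (simp add: sum_distrib_right[symmetric] sum_distrib_left[symmetric] sum_weights)
  also have "(\<Sum>x\<in>K. \<Sum>y\<in>K. (a x * w x) * (b y * w y)) = (\<Sum>k\<in>K. a k * w k) * (\<Sum>k\<in>K. b k * w k)"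
    by (simp add: sum_product)
  also have "(\<Sum>x\<in>K. \<Sum>y\<in>K. (a y * w y) * (b x * w x)) = (\<Sum>k\<in>K. a k * w k) * (\<Sum>k\<in>K. b k * w k)"
    by (subst sum.swap) (simp add: sum_product)
  finally show ?thesis
    by simp
qed

lemma Chebyshev_expectation_pmf:
  fixes a b :: "'a \<Rightarrow> real"
  assumes "finite (set_pmf p)"
    and "\<And>x y. x \<in> set_pmf p \<Longrightarrow> y \<in> set_pmf p \<Longrightarrow> (a x - a y) * (b x - b y) \<ge> 0"
  shows "measure_pmf.expectation p a * measure_pmf.expectation p b \<le>
         measure_pmf.expectation p (\<lambda>x. a x * b x)"
  using Chebyshev_sum_weighted[OF assms(1) _ sum_pmf_eq_1[OF assms(1) order_refl] assms(2)]
  by (simp add: integral_measure_pmf_real[OF assms(1)])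

lemma prod_expectation_le_expectation_prod_antimono:
  fixes \<phi> :: "'i \<Rightarrow> 'b::linorder \<Rightarrow> real" and m :: "'a \<Rightarrow> 'b"
  assumes "finite (set_pmf p)" "finite I"
    and antimono: "\<And>i. antimono (\<phi> i)" and nonneg: "\<And>i t. \<phi> i t \<ge> 0"
  shows "(\<Prod>i\<in>I. measure_pmf.expectation p (\<lambda>x. \<phi> i (m x))) \<le>
         measure_pmf.expectation p (\<lambda>x. \<Prod>i\<in>I. \<phi> i (m x))"
  using assms(2)
proof (induction I rule: finite_induct)
  case empty
  then show ?case
    by simp
next
  case (insert j I)
  have "(\<Prod>i\<in>insert j I. measure_pmf.expectation p (\<lambda>x. \<phi> i (m x)))
      \<le> measure_pmf.expectation p (\<lambda>x. \<phi> j (m x)) *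
        measure_pmf.expectation p (\<lambda>x. \<Prod>i\<in>I. \<phi> i (m x))"
    using insert by (simp add: mult_left_mono nonneg)
  also have "\<dots> \<le> measure_pmf.expectation p (\<lambda>x. \<phi> j (m x) * (\<Prod>i\<in>I. \<phi> i (m x)))"
  proof (rule Chebyshev_expectation_pmf[OF assms(1)])
    fix x y
    have similarly_ordered: "\<phi> j s \<le> \<phi> j t \<and> (\<Prod>i\<in>I. \<phi> i s) \<le> (\<Prod>i\<in>I. \<phi> i t)"
      if "t \<le> s" for s t
      by (intro conjI prod_mono antimonoD[OF antimono] nonneg that)
    show "(\<phi> j (m x) - \<phi> j (m y)) * ((\<Prod>i\<in>I. \<phi> i (m x)) - (\<Prod>i\<in>I. \<phi> i (m y))) \<ge> 0"
    proof (cases "m x \<le> m y")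
      case True
      then show ?thesis
        using similarly_ordered[of "m x" "m y"] by (intro mult_nonneg_nonneg) simp_all
    next
      case False
      then show ?thesis
        using similarly_ordered[of "m y" "m x"] by (intro mult_nonpos_nonpos) simp_all
    qed
  qed
  finally show ?case
    using insert by simp
qed

lemma power_eq_prod_threshold:
  fixes f :: "'a::comm_monoid_mult"
  assumes "m \<le> r"
  shows "f ^ m = (\<Prod>i\<in>{1..r}. if i \<le> m then f else 1)"
proof -
  have "{1..r} \<inter> {i. i \<le> m} = {1..m}"
    using assms by auto
  then show ?thesis
    by (simp add: prod.If_cases)
qed

definition row_count :: "(nat \<times> nat) set \<Rightarrow> nat \<Rightarrow> nat" where
  "row_count S k = card {i. (k, i) \<in> S}"

definition staircase :: "nat \<Rightarrow> (nat \<Rightarrow> nat) \<Rightarrow> (nat \<times> nat) set" where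
  "staircase n m = (SIGMA k:{1..n}. {1..m k})"

lemma row_count_le:
  assumes "S \<subseteq> {1..n} \<times> {1..r}"
  shows "row_count S k \<le> r"
  using card_mono[of "{1..r}" "{i. (k, i) \<in> S}"] assms by (auto simp: row_count_def)

lemma row_count_outside:
  assumes "S \<subseteq> {1..n} \<times> {1..r}" "k \<notin> {1..n}"
  shows "row_count S k = 0"
proof -
  have "{i. (k, i) \<in> S} = {}"
    using assms by auto
  then show ?thesis
    by (simp add: row_count_def)
qed

lemma staircase_row_count_subset:
  assumes "S \<subseteq> {1..n} \<times> {1..r}"
  shows "staircase n (row_count S) \<subseteq> {1..n} \<times> {1..r}"
  using row_count_le[OF assms] le_trans by (fastforce simp: staircase_def)

lemma card_staircase_row_count:
  assumes "S \<subseteq> {1..n} \<times> {1..r}"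
  shows "card (staircase n (row_count S)) = card S"
proof -
  have rows_finite: "finite {i. (k, i) \<in> S}" for k
    by (rule finite_subset[of _ "{1..r}"]) (use assms in auto)
  have "card S = card (SIGMA k:{1..n}. {i. (k, i) \<in> S})"
    using assms by (intro arg_cong[where f = card]) auto
  also have "\<dots> = card (staircase n (row_count S))"
    by (simp add: staircase_def row_count_def rows_finite)
  finally show ?thesis
    by (rule sym)
qed

lemma replication_success_eq:
  assumes "S \<subseteq> {1..n} \<times> {1..r}" "0 \<le> f" "f \<le> 1"
  shows "replication_success n r p f S =
         1 - measure_pmf.expectation p (\<lambda>k. f ^ row_count S k)"
proof -
  define E where "E = {(k, fl). \<exists>(j, i) \<in> S. k = j \<and> \<not> fl (j, i)}"
  have "measure_pmf.prob (fail_pmf n r f) {fl. (k, fl) \<notin> E} = f ^ row_count S k" for k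
  proof -
    have row: "{fl. (k, fl) \<notin> E} = {fl. \<forall>x\<in>Pair k ` {i. (k, i) \<in> S}. fl x}"
      by (auto simp: E_def)
    have card_row: "card (Pair k ` {i. (k, i) \<in> S}) = row_count S k"
      unfolding row_count_def by (intro card_image) (simp add: inj_on_def)
    have "measure_pmf.prob (fail_pmf n r f) {fl. \<forall>x\<in>Pair k ` {i. (k, i) \<in> S}. fl x}
        = f ^ card (Pair k ` {i. (k, i) \<in> S})"
      unfolding fail_pmf_def by (rule measure_Pi_pmf_bernoulli_all) (use assms in auto)
    then show ?thesis
      by (simp only: row card_row)
  qed
  then show ?thesis
    using measure_pmf.prob_compl[of "- E" "pair_pmf p (fail_pmf n r f)"]
    by (simp add: replication_success_def E_def[symmetric] measure_pmf_prob_pair_pmf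
        Compl_eq[symmetric])
qed

lemma repartition_success_eq:
  assumes "T \<subseteq> {1..n} \<times> {1..r}" "0 \<le> f" "f \<le> 1"
  shows "repartition_success n r p f T =
         1 - (\<Prod>i\<in>{1..r}. measure_pmf.expectation p (\<lambda>k. if (k, i) \<in> T then f else 1))"
proof -
  define E where "E = {(loc, fl). \<exists>(j, i) \<in> T. loc i = j \<and> \<not> fl (j, i)}"
  have "measure_pmf.prob (fail_pmf n r f) {fl. (loc, fl) \<notin> E} =
        (\<Prod>i\<in>{1..r}. if (loc i, i) \<in> T then f else 1)" for loc :: "nat \<Rightarrow> nat"
  proof -
    let ?B = "(\<lambda>i. (loc i, i)) ` {i. (loc i, i) \<in> T}"
    have hit: "{fl. (loc, fl) \<notin> E} = {fl. \<forall>x\<in>?B. fl x}"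
      by (auto simp: E_def)
    have "{i. (loc i, i) \<in> T} \<subseteq> {1..r}"
      using assms(1) by auto
    then have card_hit: "card ?B = card ({1..r} \<inter> {i. (loc i, i) \<in> T})"
      by (subst card_image) (auto simp: inj_on_def Int_absorb1)
    have "measure_pmf.prob (fail_pmf n r f) {fl. \<forall>x\<in>?B. fl x} = f ^ card ?B"
      unfolding fail_pmf_def by (rule measure_Pi_pmf_bernoulli_all) (use assms in auto)
    then show ?thesis
      by (simp add: hit card_hit prod.If_cases)
  qed
  then have "measure_pmf.prob (pair_pmf (Pi_pmf {1..r} 0 (\<lambda>_. p)) (fail_pmf n r f)) (- E) =
      measure_pmf.expectation (Pi_pmf {1..r} 0 (\<lambda>_. p))
        (\<lambda>loc. \<Prod>i\<in>{1..r}. if (loc i, i) \<in> T then f else 1)"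
    by (simp add: measure_pmf_prob_pair_pmf)
  also have "\<dots> = (\<Prod>i\<in>{1..r}. measure_pmf.expectation p (\<lambda>k. if (k, i) \<in> T then f else 1))"
    using assms(2,3)
    by (intro expectation_prod_Pi_pmf measure_pmf.integrable_const_bound[where B = 1]) auto
  finally show ?thesis
    using measure_pmf.prob_compl[of "- E" "pair_pmf (Pi_pmf {1..r} 0 (\<lambda>_. p)) (fail_pmf n r f)"]
    by (simp add: repartition_success_def E_def[symmetric])
qed

lemma repartition_success_staircase:
  assumes "S \<subseteq> {1..n} \<times> {1..r}" "0 \<le> f" "f \<le> 1"
  shows "repartition_success n r p f (staircase n (row_count S)) =
         1 - (\<Prod>i\<in>{1..r}. measure_pmf.expectation p (\<lambda>k. if i \<le> row_count S k then f else 1))"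
proof -
  have "(\<lambda>k. if (k, i) \<in> staircase n (row_count S) then f else 1) =
        (\<lambda>k. if i \<le> row_count S k then f else 1)" if "i \<in> {1..r}" for i
    using that row_count_outside[OF assms(1)] by (auto simp: staircase_def)
  then show ?thesis
    using repartition_success_eq[OF staircase_row_count_subset[OF assms(1)] assms(2,3)]
    by (simp only: cong: prod.cong)
qed

theorem theorem2:
  fixes n r :: nat and p :: "nat pmf" and f :: real
  assumes "r \<ge> 1"
    and "set_pmf p \<subseteq> {1..n}"
    and "0 \<le> f" and "f \<le> 1"
  shows "\<forall>S \<subseteq> {1..n} \<times> {1..r}. \<exists>T \<subseteq> {1..n} \<times> {1..r}.
           card T = card S \<and>
           repartition_success n r p f T \<ge> replication_success n r p f S"
proof (intro allI impI)
  fix S assume S: "S \<subseteq> {1..n} \<times> {1..r}"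
  have "(\<Prod>i\<in>{1..r}. measure_pmf.expectation p (\<lambda>k. if i \<le> row_count S k then f else 1)) \<le>
        measure_pmf.expectation p (\<lambda>k. \<Prod>i\<in>{1..r}. if i \<le> row_count S k then f else 1)"
    using assms finite_subset[OF assms(2)]
    by (intro prod_expectation_le_expectation_prod_antimono) (auto simp: antimono_def)
  then have "replication_success n r p f S \<le> repartition_success n r p f (staircase n (row_count S))"
    using assms S by (simp add: replication_success_eq repartition_success_staircase
        power_eq_prod_threshold[OF row_count_le[OF S]])
  then show "\<exists>T \<subseteq> {1..n} \<times> {1..r}. card T = card S \<and>
      repartition_success n r p f T \<ge> replication_success n r p f S"
    using staircase_row_count_subset[OF S] card_staircase_row_count[OF S] by blast
qed

end
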